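(* Suppose we have $n\ge3$ agents with additive, identical, normalized valuations, provided with a prediction of accuracy $\eta<1-\frac{1}{2(n-1+2a)}$ for some given $a\in(0,1]$; that is, the allowed error between the prediction and the true valuation is $1-\eta>\frac{1}{2(n-1+2a)}$. Then there is no online algorithm that guarantees an $a$-EFX allocation for all instances with error at most $1-\eta$, even when $T'=T=n+1$ and the prediction and the true valuation are $3$-value functions.
   Context: Online fair division with predictions and identical valuations: agents $[n]$; goods $g_1,\dots,g_T$ arrive one per time step; all agents share a true additive normalized valuation $v$ ($v(g_t)\ge0$, $\sum_{t\in[T]}v(g_t)=1$, $v(S)=\sum_{g\in S}v(g)$), and before any arrival the algorithm receives a prediction $p=(p(g_1),\dots,p(g_{T'}))$ (an additive normalized valuation over $T'$ predicted goods) and the accuracy level. Error $\frac12\sum_{t=1}^{\max\{T,T'\}}|p(g_t)-v(g_t)|$ (missing entries set to $0$); accuracy $\eta$ means the error is at most $1-\eta$. At time $t$, $v(g_t)$ is revealed and $g_t$ must be irrevocably allocated. For $S\ne\emptyset$, $\bar S=S\setminus\{g\}$ with $g\in\arg\max_{g'\in S}v(S\setminus\{g'\})$, $\bar\emptyset=\emptyset$. An allocation is $a$-EFX if $v(A_i)\ge a\cdot v(\bar A_j)$ for all $i,j$. A function is $k$-value if it takes at most $k$ distinct values. *)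

theory Defs
  imports Complex_Main
begin

text \<open>Goods g_1..g_T are indexed 0..T-1; a valuation is the list of the goods' values.\<close>

definition normalized :: "real list \<Rightarrow> bool" where
  "normalized v \<longleftrightarrow> (\<forall>x\<in>set v. 0 \<le> x) \<and> sum_list v = 1"

definition val :: "real list \<Rightarrow> nat set \<Rightarrow> real" where
  "val v S = (\<Sum>t\<in>S. v ! t)"

definition bar :: "real list \<Rightarrow> nat set \<Rightarrow> nat set" where
  "bar v S = (if S = {} then {} else
     S - {SOME g. g \<in> S \<and> (\<forall>g'\<in>S. val v (S - {g'}) \<le> val v (S - {g}))})"

definition a_EFX :: "real list \<Rightarrow> nat \<Rightarrow> (nat \<Rightarrow> nat set) \<Rightarrow> real \<Rightarrow> bool" where
  "a_EFX v n A a \<longleftrightarrow> (\<forall>i<n. \<forall>j<n. val v (A i) \<ge> a * val v (bar v (A j)))"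

definition pred_error :: "real list \<Rightarrow> real list \<Rightarrow> real" where
  "pred_error p v = (1/2) * (\<Sum>t<max (length p) (length v).
      \<bar>(if t < length p then p ! t else 0) - (if t < length v then v ! t else 0)\<bar>)"

text \<open>A deterministic online algorithm is a map from (prediction, values revealed so far)
  to the agent receiving the currently arriving good.  Bundle of agent i:\<close>
definition online_alloc :: "(real list \<Rightarrow> real list \<Rightarrow> nat) \<Rightarrow> real list \<Rightarrow> real list \<Rightarrow> nat \<Rightarrow> nat set" where
  "online_alloc alg p v i = {t. t < length v \<and> alg p (take (Suc t) v) = i}"

end

theory Submission
  imports Defs
begin

(* The adversary announces p = (\<epsilon>, ..., \<epsilon>, u, w) with n - 1 tiny goods, \<epsilon> < a w, and watches
   where the algorithm sends the tiny goods, which it must do before the last two values are revealed.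
   If they go to distinct agents, the true valuation is p itself: an agent owning neither of the last
   two goods holds at most one tiny good, while by pigeonhole some bundle contains two goods, one of
   them among the last two and hence worth at least w. If two tiny goods share an agent, the true
   valuation is (\<epsilon>, ..., \<epsilon>, u + w, 0), at error w: some agent gets nothing of value, while
   the shared bundle is still worth \<epsilon> after removing a good. As w can be taken arbitrarily small,
   of the accuracy bound only \<eta> < 1 is needed. *)

definition bundles_of :: "(nat \<Rightarrow> nat) \<Rightarrow> nat \<Rightarrow> nat \<Rightarrow> nat set" where
  "bundles_of owner N i = {t. t < N \<and> owner t = i}"

lemma online_alloc_eq_bundles_of:
  "online_alloc alg p v = bundles_of (\<lambda>t. alg p (take (Suc t) v)) (length v)"
  unfolding online_alloc_def bundles_of_def ..

lemma val_diff_le_val_bar: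
  assumes "finite S" "g \<in> S"
  shows "val v (S - {g}) \<le> val v (bar v S)"
proof -
  let ?P = "\<lambda>g. g \<in> S \<and> (\<forall>g'\<in>S. val v (S - {g'}) \<le> val v (S - {g}))"
  have "Max ((\<lambda>g. val v (S - {g})) ` S) \<in> (\<lambda>g. val v (S - {g})) ` S"
    using assms by (intro Max_in) auto
  then obtain h where "h \<in> S" "val v (S - {h}) = Max ((\<lambda>g. val v (S - {g})) ` S)"
    by auto
  then have "?P h"
    using assms(1) by simp
  then have "?P (SOME g. ?P g)"
    by (rule someI)
  then show ?thesis
    using assms unfolding bar_def by auto
qed

lemma nth_le_val_bar:
  assumes "finite S" "s \<in> S" "t \<in> S" "s \<noteq> t" "\<forall>x\<in>S. 0 \<le> v ! x"
  shows "v ! t \<le> val v (bar v S)"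
proof -
  have "v ! t \<le> val v (S - {s})"
    unfolding val_def using assms by (intro member_le_sum) auto
  also have "\<dots> \<le> val v (bar v S)"
    by (rule val_diff_le_val_bar) (use assms in auto)
  finally show ?thesis .
qed

lemma not_a_EFXI:
  assumes "i < n" "j < n" "val v (A i) < a * val v (bar v (A j))"
  shows "\<not> a_EFX v n A a"
  using assms unfolding a_EFX_def by (auto simp: not_le)

lemma pred_error_append_same:
  assumes "length ys = length zs"
  shows "pred_error (xs @ ys) (xs @ zs) = pred_error ys zs"
  using assms
proof (induction xs)
  case (Cons x xs)
  then show ?case
    by (simp add: pred_error_def sum.lessThan_Suc_shift del: sum.lessThan_Suc)
qed simp

lemma card_set_replicate_append_pair_le: "card (set (replicate m e @ [x, y])) \<le> 3"
proof -
  have "card (set (replicate m e @ [x, y])) \<le> card {e, x, y}"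
    by (intro card_mono) auto
  also have "\<dots> \<le> 3"
    by (simp add: card_insert_if)
  finally show ?thesis .
qed

lemma not_a_EFX_if_first_goods_spread:
  fixes v :: "real list"
  assumes len: "length v = Suc (Suc m)" and "m \<ge> 2"
    and owner: "\<forall>t < length v. f t < Suc m" and inj: "inj_on f {..<m}"
    and nonneg: "\<forall>x\<in>set v. 0 \<le> x" and small: "\<forall>t<m. v ! t \<le> \<epsilon>"
    and large: "w \<le> v ! m" "w \<le> v ! Suc m" and "\<epsilon> < a * w" "0 \<le> a"
  shows "\<not> a_EFX v (Suc m) (bundles_of f (length v)) a"
proof -
  let ?A = "bundles_of f (length v)"
  have fin: "finite (?A i)" and nonneg_A: "\<forall>x\<in>?A i. 0 \<le> v ! x" for i
    using nonneg len by (auto simp: bundles_of_def)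
  have "\<not> inj_on f {..<length v}"
  proof
    assume "inj_on f {..<length v}"
    then have "card {..<length v} \<le> card {..<Suc m}"
      using owner by (intro card_inj_on_le) auto
    then show False
      using len by simp
  qed
  then obtain s t where st: "s < length v" "t < length v" "s \<noteq> t" "f s = f t" "m \<le> t"
  proof -
    obtain s t where "s < length v" "t < length v" "s \<noteq> t" "f s = f t"
      using \<open>\<not> inj_on f {..<length v}\<close> unfolding inj_on_def by auto
    moreover have "\<not> (s < m \<and> t < m)"
      using inj calculation unfolding inj_on_def by auto
    ultimately show ?thesis
      using that[of s t] that[of t s] by (auto simp: not_less)
  qed
  then have "t = m \<or> t = Suc m"
    using len by auto
  then have "w \<le> v ! t"
    using large by auto
  also have "v ! t \<le> val v (bar v (?A (f t)))"
    using st fin nonneg_A by (intro nth_le_val_bar[of _ s]) (auto simp: bundles_of_def)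
  finally have big: "w \<le> val v (bar v (?A (f t)))" .
  obtain k where k: "k < Suc m" "k \<noteq> f m" "k \<noteq> f (Suc m)"
  proof -
    have "\<exists>k\<in>{0, 1, 2}. k \<noteq> f m \<and> k \<noteq> f (Suc m)"
      by auto
    then obtain k :: nat where "k \<in> {0, 1, 2}" "k \<noteq> f m" "k \<noteq> f (Suc m)"
      by blast
    moreover have "k < Suc m"
      using \<open>k \<in> {0, 1, 2}\<close> \<open>m \<ge> 2\<close> by auto
    ultimately show ?thesis
      using that by blast
  qed
  have Ak_small: "?A k \<subseteq> {..<m}"
    using k len by (auto simp: bundles_of_def less_Suc_eq)
  have "card (?A k) = card (f ` ?A k)"
    using inj Ak_small by (intro card_image[symmetric]) (rule inj_on_subset)
  also have "\<dots> \<le> card {k}"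
    by (intro card_mono) (auto simp: bundles_of_def)
  finally have "card (?A k) \<le> 1"
    by simp
  have "0 \<le> v ! 0" "v ! 0 \<le> \<epsilon>"
    using nonneg small len \<open>m \<ge> 2\<close> by auto
  then have "0 \<le> \<epsilon>"
    by linarith
  have "val v (?A k) \<le> real (card (?A k)) * \<epsilon>"
    unfolding val_def using small Ak_small by (intro sum_bounded_above) auto
  also have "\<dots> \<le> \<epsilon>"
    using \<open>card (?A k) \<le> 1\<close> \<open>0 \<le> \<epsilon>\<close> by (simp add: mult_left_le_one_le)
  also have "\<dots> < a * val v (bar v (?A (f t)))"
    using mult_left_mono[OF big \<open>0 \<le> a\<close>] \<open>\<epsilon> < a * w\<close> by linarith
  finally show ?thesis
    using k st owner by (intro not_a_EFXI) auto
qed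

lemma not_a_EFX_if_first_goods_shared:
  fixes v :: "real list"
  assumes len: "length v = Suc (Suc m)"
    and owner: "\<forall>t < length v. f t < Suc m" and not_inj: "\<not> inj_on f {..<m}"
    and nonneg: "\<forall>x\<in>set v. 0 \<le> x" and small: "\<forall>t<m. \<epsilon> \<le> v ! t"
    and last: "v ! Suc m = 0" and "0 < \<epsilon>" "0 < a"
  shows "\<not> a_EFX v (Suc m) (bundles_of f (length v)) a"
proof -
  let ?A = "bundles_of f (length v)"
  have fin: "finite (?A i)" and nonneg_A: "\<forall>x\<in>?A i. 0 \<le> v ! x" for i
    using nonneg len by (auto simp: bundles_of_def)
  obtain s t where st: "s < m" "t < m" "s \<noteq> t" "f s = f t"
    using not_inj unfolding inj_on_def by auto
  have "\<epsilon> \<le> v ! t"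
    using small st by auto
  also have "v ! t \<le> val v (bar v (?A (f t)))"
    using st fin nonneg_A len by (intro nth_le_val_bar[of _ s]) (auto simp: bundles_of_def)
  finally have big: "\<epsilon> \<le> val v (bar v (?A (f t)))" .
  have "card (f ` {..<m}) < m"
    using not_inj card_image_le[of "{..<m}" f] inj_on_iff_eq_card[of "{..<m}" f] by simp
  then have "card (insert (f m) (f ` {..<m})) < card {..<Suc m}"
    by (simp add: card_insert_if)
  then have "\<not> {..<Suc m} \<subseteq> insert (f m) (f ` {..<m})"
    using card_mono[of "insert (f m) (f ` {..<m})" "{..<Suc m}"] by auto
  then obtain k where k: "k < Suc m" "k \<noteq> f m" "k \<notin> f ` {..<m}"
    by auto
  have "?A k \<subseteq> {Suc m}"
    using k len by (auto simp: bundles_of_def less_Suc_eq)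
  then have "val v (?A k) = 0"
    unfolding val_def using last by (intro sum.neutral) auto
  also have "0 < a * val v (bar v (?A (f t)))"
    using big \<open>0 < \<epsilon>\<close> \<open>0 < a\<close> by simp
  finally show ?thesis
    using k st owner len by (intro not_a_EFXI) auto
qed

lemma online_alloc_not_a_EFX_on_prediction_or_perturbation:
  assumes "m \<ge> 2" "0 < a" "0 < \<epsilon>" "\<epsilon> < a * w" "w \<le> u"
    and alg: "\<forall>p vs. alg p vs < Suc m"
  defines "p \<equiv> replicate m \<epsilon> @ [u, w]" and "v \<equiv> replicate m \<epsilon> @ [u + w, 0]"
  shows "\<not> a_EFX p (Suc m) (online_alloc alg p p) a \<or> \<not> a_EFX v (Suc m) (online_alloc alg p v) a"
proof -
  have "0 < w"
    using assms(2-4) zero_less_mult_pos[of a w] by linarith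
  have same_prefix: "take (Suc t) p = take (Suc t) v" if "t < m" for t
    using that by (simp add: p_def v_def)
  have p_goods: "\<forall>x\<in>set p. 0 \<le> x" "\<forall>t<m. p ! t \<le> \<epsilon>" "w \<le> p ! m" "w \<le> p ! Suc m"
    using \<open>0 < \<epsilon>\<close> \<open>0 < w\<close> \<open>w \<le> u\<close> by (simp_all add: p_def nth_append)
  have v_goods: "\<forall>x\<in>set v. 0 \<le> x" "\<forall>t<m. \<epsilon> \<le> v ! t" "v ! Suc m = 0"
    using \<open>0 < \<epsilon>\<close> \<open>0 < w\<close> \<open>w \<le> u\<close> by (simp_all add: v_def nth_append)
  have len: "length p = Suc (Suc m)" "length v = Suc (Suc m)"
    by (simp_all add: p_def v_def)
  have owner: "\<forall>t < length x. alg p (take (Suc t) x) < Suc m" for x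
    using alg by blast
  show ?thesis
  proof (cases "inj_on (\<lambda>t. alg p (take (Suc t) p)) {..<m}")
    case True
    have "\<not> a_EFX p (Suc m) (online_alloc alg p p) a"
      unfolding online_alloc_eq_bundles_of
      using not_a_EFX_if_first_goods_spread[OF len(1) \<open>m \<ge> 2\<close> owner True p_goods
          \<open>\<epsilon> < a * w\<close>] \<open>0 < a\<close> by simp
    then show ?thesis ..
  next
    case False
    moreover have "inj_on (\<lambda>t. alg p (take (Suc t) p)) {..<m} \<longleftrightarrow>
        inj_on (\<lambda>t. alg p (take (Suc t) v)) {..<m}"
      using same_prefix by (intro inj_on_cong) simp
    ultimately have "\<not> inj_on (\<lambda>t. alg p (take (Suc t) v)) {..<m}"
      by simp
    then have "\<not> a_EFX v (Suc m) (online_alloc alg p v) a"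
      unfolding online_alloc_eq_bundles_of
      using not_a_EFX_if_first_goods_shared[OF len(2) owner _ v_goods
          \<open>0 < \<epsilon>\<close> \<open>0 < a\<close>] by blast
    then show ?thesis ..
  qed
qed

lemma adversary_parameters:
  fixes e a :: real
  assumes "0 < e" "0 < a" "a \<le> 1"
  obtains \<epsilon> w u where "0 < \<epsilon>" "\<epsilon> < a * w" "0 < w" "w \<le> u" "w \<le> e"
    "real m * \<epsilon> + u + w = 1"
proof -
  define w where "w = min e (1 / (real m + 2))"
  define \<epsilon> where "\<epsilon> = a * w / 2"
  have "0 < w"
    using assms by (simp add: w_def)
  have "w * (real m + 2) \<le> 1"
    using pos_le_divide_eq[of "real m + 2" w 1] by (simp add: w_def)
  have "a * w \<le> w"
    using mult_right_mono[OF \<open>a \<le> 1\<close>, of w] \<open>0 < w\<close> by simp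
  then have "\<epsilon> \<le> w"
    using \<open>0 < w\<close> by (simp add: \<epsilon>_def)
  then have "real m * \<epsilon> \<le> real m * w"
    by (simp add: mult_left_mono)
  show ?thesis
  proof (rule that[of \<epsilon> w "1 - real m * \<epsilon> - w"])
    show "0 < \<epsilon>" "\<epsilon> < a * w" "0 < w"
      using \<open>0 < w\<close> \<open>0 < a\<close> by (simp_all add: \<epsilon>_def)
    show "w \<le> 1 - real m * \<epsilon> - w"
      using \<open>w * (real m + 2) \<le> 1\<close> \<open>real m * \<epsilon> \<le> real m * w\<close> by (simp add: algebra_simps)
  qed (simp_all add: w_def)
qed

theorem lemma4p7:
  fixes n :: nat and a \<eta> :: real and alg :: "real list \<Rightarrow> real list \<Rightarrow> nat"
  assumes "n \<ge> 3" and "0 < a" and "a \<le> 1"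
    and "\<eta> < 1 - 1 / (2 * (real n - 1 + 2 * a))"
    and "\<forall>p vs. alg p vs < n"
  shows "\<exists>p v. length p = n + 1 \<and> length v = n + 1 \<and> normalized p \<and> normalized v
      \<and> card (set p) \<le> 3 \<and> card (set v) \<le> 3 \<and> pred_error p v \<le> 1 - \<eta>
      \<and> \<not> a_EFX v n (online_alloc alg p v) a"
proof -
  obtain m where n: "n = Suc m" "2 \<le> m"
    using assms(1) by (cases n) auto
  have "0 < 1 / (2 * (real n - 1 + 2 * a))"
    using assms(1,2) by simp
  then have "\<eta> < 1"
    using assms(4) by linarith
  then obtain \<epsilon> w u where params: "0 < \<epsilon>" "\<epsilon> < a * w" "0 < w" "w \<le> u" "w \<le> 1 - \<eta>"
      "real m * \<epsilon> + u + w = 1"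
    using adversary_parameters[of "1 - \<eta>" a m] assms(2,3) by auto
  define p where "p = replicate m \<epsilon> @ [u, w]"
  define v where "v = replicate m \<epsilon> @ [u + w, 0]"
  have "pred_error [u, w] [u, w] = 0" "pred_error [u, w] [u + w, 0] = w"
    using params(3) by (simp_all add: pred_error_def numeral_2_eq_2)
  then have "pred_error p p \<le> 1 - \<eta>" "pred_error p v \<le> 1 - \<eta>"
    using params(3,5) unfolding p_def v_def by (simp_all add: pred_error_append_same)
  moreover have "\<not> a_EFX p n (online_alloc alg p p) a \<or> \<not> a_EFX v n (online_alloc alg p v) a"
    using online_alloc_not_a_EFX_on_prediction_or_perturbation[of m a \<epsilon> w u alg] n params assms(2,5)
    unfolding p_def v_def by simp
  moreover have "normalized p" "normalized v"
    using params by (simp_all add: normalized_def p_def v_def sum_list_replicate)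
  moreover have "card (set p) \<le> 3" "card (set v) \<le> 3"
    unfolding p_def v_def by (rule card_set_replicate_append_pair_le)+
  moreover have "length p = n + 1" "length v = n + 1"
    using n by (simp_all add: p_def v_def)
  ultimately show ?thesis
    by blast
qed

end
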